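(* Let $a$ be a positive integer and $n\in\mathbb{N}$ (with $0\in\mathbb{N}$). For $x>0$, $x\neq 1$, \[ \frac{d^n}{dx^n}\left(\log_x a\right)=\frac{d^n}{dx^n}\left(\frac{\ln a}{\ln x}\right)=(\log_x a)\,\frac{(-1)^n n!}{x^n}\sum_{\sum_i i y_{k,i}=n}\frac{\left(\sum_i y_{k,i}\right)!}{(\ln x)^{\sum_i y_{k,i}}}\prod_{i=1}^{n}\frac{1}{i^{y_{k,i}}\,y_{k,i}!}. \]
   Context: The sum runs over all partitions of $n$, each represented as a tuple $(y_{k,1},\ldots,y_{k,n})$ of non-negative integers with $\sum_{i=1}^n i\,y_{k,i}=n$; sums $\sum_i$ run over $i=1,\ldots,n$. For $n=0$ the only partition is the zero partition. *)

theory Defs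
  imports "HOL-Analysis.Analysis"
begin

text \<open>Partitions of n, encoded as multiplicity vectors y : nat \<Rightarrow> nat
  supported on {1..n} (y i = number of parts equal to i), with
  \<Sum>i=1..n. i * y i = n.\<close>
definition partitions_mult :: "nat \<Rightarrow> (nat \<Rightarrow> nat) set" where
  "partitions_mult n = {y. (\<forall>i. i \<notin> {1..n} \<longrightarrow> y i = 0) \<and> (\<Sum>i=1..n. i * y i) = n}"

end

theory Submission
  imports Defs "HOL-Combinatorics.Stirling"
begin

text \<open>
  Since \<open>log t a = ln a / ln t\<close>, it suffices to differentiate \<open>1 / ln t\<close>. By induction on \<open>n\<close>,
  its \<open>n\<close>-th derivative is \<open>(-1)^n t^-n \<Sum>k\<le>n. k! c(n,k) / ln t ^ (k+1)\<close> with \<open>c(n,k)\<close> the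
  unsigned Stirling numbers of the first kind; the induction step is exactly the recurrence
  \<open>c(n+1,k+1) = n c(n,k+1) + c(n,k)\<close>.

  The partition sum collapses to the same expression after grouping the partitions \<open>y\<close> of \<open>n\<close>
  by their number of parts \<open>k\<close>: the weight \<open>\<Prod>i. 1 / (i^y_i y_i!)\<close> is the proportion of
  permutations of \<open>n\<close> letters with cycle type \<open>y\<close> (Cauchy), so the weights of the partitions
  with \<open>k\<close> parts add up to \<open>c(n,k) / n!\<close>. We prove this through the generating function
  \<open>Z_m(u) = \<Sum>y. u^(number of parts of y) \<Prod>i. 1 / (i^y_i y_i!)\<close>: removing one part of size
  \<open>i\<close> from a partition of \<open>m\<close> gives \<open>m Z_m = u \<Sum>j<m. Z_j\<close>, the recurrence of the rising
  factorial \<open>u^(m) / m!\<close>, whose coefficients are the \<open>c(m,k) / m!\<close>.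
\<close>

definition bounded_partitions :: "nat \<Rightarrow> nat \<Rightarrow> (nat \<Rightarrow> nat) set" where
  "bounded_partitions N m = {y. (\<forall>i. i \<notin> {1..N} \<longrightarrow> y i = 0) \<and> (\<Sum>i=1..N. i * y i) = m}"

definition num_parts :: "nat \<Rightarrow> (nat \<Rightarrow> nat) \<Rightarrow> nat" where
  "num_parts N y = (\<Sum>i=1..N. y i)"

definition cycle_type_weight :: "nat \<Rightarrow> (nat \<Rightarrow> nat) \<Rightarrow> real" where
  "cycle_type_weight N y = (\<Prod>i=1..N. 1 / (real i ^ y i * fact (y i)))"

definition partition_gf :: "nat \<Rightarrow> nat \<Rightarrow> real \<Rightarrow> real" where
  "partition_gf N m u =
     (\<Sum>y\<in>bounded_partitions N m. u ^ num_parts N y * cycle_type_weight N y)"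

definition add_part :: "nat \<Rightarrow> (nat \<Rightarrow> nat) \<Rightarrow> nat \<Rightarrow> nat" where
  "add_part i y = y(i := Suc (y i))"

lemma partitions_mult_eq_bounded_partitions: "partitions_mult n = bounded_partitions n n"
  unfolding partitions_mult_def bounded_partitions_def ..

lemma bounded_partitions_part_le:
  assumes "y \<in> bounded_partitions N m" and "i \<in> {1..N}"
  shows "i * y i \<le> m"
proof -
  have "i * y i \<le> (\<Sum>i=1..N. i * y i)"
    by (rule member_le_sum) (use assms in auto)
  with assms show ?thesis by (simp add: bounded_partitions_def)
qed

lemma bounded_partitions_multiplicity_le:
  assumes "y \<in> bounded_partitions N m"
  shows "y i \<le> m"
proof (cases "i \<in> {1..N}")
  case True
  then have "y i \<le> i * y i" by simp
  also have "\<dots> \<le> m" using bounded_partitions_part_le[OF assms True] .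
  finally show ?thesis .
qed (use assms in \<open>simp add: bounded_partitions_def\<close>)

lemma finite_bounded_partitions: "finite (bounded_partitions N m)"
proof (rule finite_subset)
  show "bounded_partitions N m \<subseteq>
          {y. \<forall>i. (i \<in> {1..N} \<longrightarrow> y i \<in> {0..m}) \<and> (i \<notin> {1..N} \<longrightarrow> y i = 0)}"
    by (auto simp: bounded_partitions_multiplicity_le) (auto simp: bounded_partitions_def)
  show "finite \<dots>"
    by (rule finite_set_of_finite_funs) auto
qed

lemma num_parts_le:
  assumes "y \<in> bounded_partitions N m"
  shows "num_parts N y \<le> m"
proof -
  have "num_parts N y \<le> (\<Sum>i=1..N. i * y i)"
    unfolding num_parts_def by (rule sum_mono) auto
  with assms show ?thesis by (simp add: bounded_partitions_def)
qed

lemma bounded_partitions_0: "bounded_partitions N 0 = {\<lambda>_. 0}"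
proof safe
  fix y assume "y \<in> bounded_partitions N 0"
  then show "y = (\<lambda>_. 0)"
    using bounded_partitions_multiplicity_le[of y N 0] by auto
qed (simp add: bounded_partitions_def)

lemma add_part_same [simp]: "add_part i y i = Suc (y i)"
  by (simp add: add_part_def)

lemma sum_add_part:
  assumes "i \<in> {1..N}"
  shows "(\<Sum>j=1..N. j * add_part i y j) = i + (\<Sum>j=1..N. j * y j)"
proof -
  have "(\<lambda>j. j * add_part i y j) = (\<lambda>j. j * y j + (if j = i then i else 0))"
    by (auto simp: add_part_def)
  with assms show ?thesis
    by (simp only:) (simp add: sum.distrib)
qed

lemma num_parts_add_part:
  assumes "i \<in> {1..N}"
  shows "num_parts N (add_part i y) = Suc (num_parts N y)"
proof -
  have "add_part i y = (\<lambda>j. y j + (if j = i then 1 else 0))"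
    by (auto simp: add_part_def)
  with assms show ?thesis
    by (simp add: num_parts_def sum.distrib)
qed

lemma cycle_type_weight_add_part:
  assumes "i \<in> {1..N}"
  shows "real (i * Suc (y i)) * cycle_type_weight N (add_part i y) = cycle_type_weight N y"
proof -
  define w where "w z j = 1 / (real j ^ z j * fact (z j))" for z j
  have split: "cycle_type_weight N z = w z i * (\<Prod>j\<in>{1..N}-{i}. w z j)" for z
    unfolding cycle_type_weight_def w_def using assms by (simp add: prod.remove)
  have rest: "(\<Prod>j\<in>{1..N}-{i}. w (add_part i y) j) = (\<Prod>j\<in>{1..N}-{i}. w y j)"
    by (rule prod.cong) (auto simp: w_def add_part_def)
  have "w (add_part i y) i = w y i / (real i * real (Suc (y i)))"
    by (simp add: w_def add_part_def mult_ac)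
  moreover have "real i * real (Suc (y i)) \<noteq> 0"
    using assms by simp
  ultimately have "real (i * Suc (y i)) * w (add_part i y) i = w y i"
    by (simp only: of_nat_mult) simp
  then show ?thesis
    unfolding split[of "add_part i y"] split[of y] rest by (metis mult.assoc)
qed

lemma bij_betw_add_part:
  assumes "i \<in> {1..N}" and "i \<le> m"
  shows "bij_betw (add_part i) (bounded_partitions N (m - i))
           {y \<in> bounded_partitions N m. y i \<noteq> 0}"
proof (rule bij_betw_byWitness[where f' = "\<lambda>z. z(i := z i - 1)"])
  show "\<forall>y\<in>bounded_partitions N (m - i). (add_part i y)(i := add_part i y i - 1) = y"
    by (auto simp: add_part_def)
  show "\<forall>z\<in>{y \<in> bounded_partitions N m. y i \<noteq> 0}. add_part i (z(i := z i - 1)) = z"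
    by (auto simp: add_part_def)
  show "add_part i ` bounded_partitions N (m - i) \<subseteq> {y \<in> bounded_partitions N m. y i \<noteq> 0}"
  proof safe
    fix y assume y: "y \<in> bounded_partitions N (m - i)"
    with sum_add_part[OF assms(1), of y] assms(2)
    have "(\<Sum>j=1..N. j * add_part i y j) = m"
      by (simp add: bounded_partitions_def)
    with y assms(1) show "add_part i y \<in> bounded_partitions N m"
      by (auto simp: bounded_partitions_def add_part_def)
  qed simp
  show "(\<lambda>z. z(i := z i - 1)) ` {y \<in> bounded_partitions N m. y i \<noteq> 0}
          \<subseteq> bounded_partitions N (m - i)"
  proof (rule image_subsetI)
    fix z assume "z \<in> {y \<in> bounded_partitions N m. y i \<noteq> 0}"
    then have z: "z \<in> bounded_partitions N m" "z i \<noteq> 0"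
      by simp_all
    have "add_part i (z(i := z i - 1)) = z"
      using z(2) by (auto simp: add_part_def)
    with sum_add_part[OF assms(1), of "z(i := z i - 1)"] z(1)
    have "m = i + (\<Sum>j=1..N. j * (z(i := z i - 1)) j)"
      by (simp add: bounded_partitions_def)
    then show "z(i := z i - 1) \<in> bounded_partitions N (m - i)"
      using z(1) assms(1) by (auto simp: bounded_partitions_def)
  qed
qed

lemma sum_parts_of_size_eq_partition_gf:
  assumes "i \<in> {1..N}" and "i \<le> m"
  shows "(\<Sum>y\<in>bounded_partitions N m.
            real (i * y i) * (u ^ num_parts N y * cycle_type_weight N y))
         = u * partition_gf N (m - i) u"
proof -
  let ?t = "\<lambda>y. u ^ num_parts N y * cycle_type_weight N y"
  have "(\<Sum>y\<in>bounded_partitions N m. real (i * y i) * ?t y) =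
        (\<Sum>y\<in>{y \<in> bounded_partitions N m. y i \<noteq> 0}. real (i * y i) * ?t y)"
    by (rule sum.mono_neutral_right) (auto simp: finite_bounded_partitions)
  also have "\<dots> = (\<Sum>y\<in>bounded_partitions N (m - i).
                      real (i * add_part i y i) * ?t (add_part i y))"
    by (rule sum.reindex_bij_betw[OF bij_betw_add_part[OF assms], symmetric])
  also have "\<dots> = (\<Sum>y\<in>bounded_partitions N (m - i). u * ?t y)"
  proof (rule sum.cong[OF refl])
    fix y
    have "real (i * add_part i y i) * ?t (add_part i y) =
          u * u ^ num_parts N y * (real (i * Suc (y i)) * cycle_type_weight N (add_part i y))"
      using assms(1) by (simp add: num_parts_add_part)
    also have "\<dots> = u * ?t y"
      using cycle_type_weight_add_part[OF assms(1)] by simp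
    finally show "real (i * add_part i y i) * ?t (add_part i y) = u * ?t y" .
  qed
  also have "\<dots> = u * partition_gf N (m - i) u"
    by (simp add: partition_gf_def sum_distrib_left)
  finally show ?thesis .
qed

lemma partition_gf_recurrence:
  assumes "m \<le> N"
  shows "real m * partition_gf N m u = u * (\<Sum>j<m. partition_gf N j u)"
proof -
  let ?t = "\<lambda>y. u ^ num_parts N y * cycle_type_weight N y"
  have "real m * partition_gf N m u =
        (\<Sum>y\<in>bounded_partitions N m. real (\<Sum>i=1..N. i * y i) * ?t y)"
    unfolding partition_gf_def sum_distrib_left
    by (rule sum.cong) (auto simp: bounded_partitions_def)
  also have "\<dots> = (\<Sum>i=1..N. \<Sum>y\<in>bounded_partitions N m. real (i * y i) * ?t y)"
    by (simp only: of_nat_sum sum_distrib_right sum.swap[of _ _ "{1..N}"])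
  also have "\<dots> = (\<Sum>i=1..m. \<Sum>y\<in>bounded_partitions N m. real (i * y i) * ?t y)"
  proof (rule sum.mono_neutral_right)
    show "\<forall>i\<in>{1..N} - {1..m}. (\<Sum>y\<in>bounded_partitions N m. real (i * y i) * ?t y) = 0"
    proof (intro ballI sum.neutral)
      fix i y assume "i \<in> {1..N} - {1..m}" "y \<in> bounded_partitions N m"
      then have "y i = 0"
        using bounded_partitions_part_le[of y N m i] by (cases "y i") auto
      then show "real (i * y i) * ?t y = 0" by simp
    qed
  qed (use assms in auto)
  also have "\<dots> = (\<Sum>i=1..m. u * partition_gf N (m - i) u)"
    using assms by (intro sum.cong refl sum_parts_of_size_eq_partition_gf) auto
  also have "\<dots> = u * (\<Sum>i<m. partition_gf N (m - Suc i) u)"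
    by (simp add: sum_distrib_left sum.atLeast1_atMost_eq)
  also have "\<dots> = u * (\<Sum>j<m. partition_gf N j u)"
    using sum.nat_diff_reindex[of "\<lambda>j. partition_gf N j u" m] by simp
  finally show ?thesis .
qed

lemma sum_pochhammer_div_fact:
  "u * (\<Sum>j<m. pochhammer u j / fact j) = real m * pochhammer u m / fact m"
proof (induction m)
  case (Suc m)
  have "u * (\<Sum>j<Suc m. pochhammer u j / fact j) = (real m + u) * pochhammer u m / fact m"
    using Suc by (simp add: field_simps)
  also have "\<dots> = real (Suc m) * pochhammer u (Suc m) / fact (Suc m)"
    by (simp add: pochhammer_Suc field_simps del: of_nat_Suc)
  finally show ?case .
qed simp

lemma partition_gf_eq_pochhammer:
  assumes "m \<le> N"
  shows "partition_gf N m u = pochhammer u m / fact m"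
  using assms
proof (induction m rule: less_induct)
  case (less m)
  show ?case
  proof (cases "m = 0")
    case True
    then show ?thesis
      by (simp add: partition_gf_def bounded_partitions_0 num_parts_def cycle_type_weight_def)
  next
    case False
    have "real m * partition_gf N m u = u * (\<Sum>j<m. pochhammer u j / fact j)"
      using partition_gf_recurrence[OF less.prems] less by simp
    also have "\<dots> = real m * (pochhammer u m / fact m)"
      by (simp add: sum_pochhammer_div_fact)
    finally show ?thesis
      using False by (metis mult_left_cancel of_nat_eq_0_iff)
  qed
qed

lemma sum_cycle_type_weight_num_parts_eq_stirling:
  assumes "k \<le> n"
  shows "(\<Sum>y | y \<in> bounded_partitions n n \<and> num_parts n y = k. cycle_type_weight n y)
         = real (stirling n k) / fact n"
proof -
  define c where
    "c k = (\<Sum>y | y \<in> bounded_partitions n n \<and> num_parts n y = k. cycle_type_weight n y)" for k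
  have "(\<Sum>k\<le>n. c k * u ^ k) = (\<Sum>k\<le>n. real (stirling n k) / fact n * u ^ k)" for u
  proof -
    have "(\<Sum>k\<le>n. c k * u ^ k) =
          (\<Sum>k\<le>n. \<Sum>y | y \<in> bounded_partitions n n \<and> num_parts n y = k.
             u ^ num_parts n y * cycle_type_weight n y)"
      unfolding c_def sum_distrib_right by (intro sum.cong refl) auto
    also have "\<dots> = partition_gf n n u"
      unfolding partition_gf_def
      by (rule sum.group) (auto simp: finite_bounded_partitions num_parts_le)
    also have "\<dots> = (\<Sum>k\<le>n. real (stirling n k) * u ^ k) / fact n"
      by (simp add: partition_gf_eq_pochhammer stirling_pochhammer)
    finally show ?thesis
      by (simp add: sum_divide_distrib)
  qed
  then have "\<forall>k\<le>n. c k = real (stirling n k) / fact n"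
    using polyfun_eq_coeffs[where n = n and c = c and d = "\<lambda>k. real (stirling n k) / fact n"]
    by blast
  with assms show ?thesis
    unfolding c_def by blast
qed

lemma sum_partitions_mult_by_num_parts:
  fixes f :: "nat \<Rightarrow> real"
  shows "(\<Sum>y\<in>partitions_mult n.
            f (\<Sum>i=1..n. y i) * (\<Prod>i=1..n. 1 / (real i ^ y i * fact (y i))))
         = (\<Sum>k\<le>n. f k * (real (stirling n k) / fact n))"
proof -
  have "(\<Sum>y\<in>partitions_mult n.
            f (\<Sum>i=1..n. y i) * (\<Prod>i=1..n. 1 / (real i ^ y i * fact (y i))))
        = (\<Sum>y\<in>bounded_partitions n n. f (num_parts n y) * cycle_type_weight n y)"
    by (simp add: partitions_mult_eq_bounded_partitions num_parts_def cycle_type_weight_def)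
  also have "\<dots> = (\<Sum>k\<le>n. \<Sum>y | y \<in> bounded_partitions n n \<and> num_parts n y = k.
                      f (num_parts n y) * cycle_type_weight n y)"
    by (rule sum.group[symmetric]) (auto simp: finite_bounded_partitions num_parts_le)
  also have "\<dots> = (\<Sum>k\<le>n. f k * (real (stirling n k) / fact n))"
    by (intro sum.cong refl)
       (simp add: sum_cycle_type_weight_num_parts_eq_stirling flip: sum_distrib_left)
  finally show ?thesis .
qed

lemma has_real_derivative_inverse_power_ln_power:
  fixes t :: real
  assumes "t > 0" and "ln t \<noteq> 0"
  shows "((\<lambda>t. 1 / (t ^ n * ln t ^ (k + 1))) has_real_derivative
           - real n / (t ^ (n + 1) * ln t ^ (k + 1)) - real (k + 1) / (t ^ (n + 1) * ln t ^ (k + 2)))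
         (at t)"
proof -
  let ?p = "\<lambda>t. t ^ n * ln t ^ Suc k"
  let ?p' = "real n * t ^ (n - Suc 0) * ln t ^ Suc k + (1 + real k) * (inverse t * ln t ^ k) * t ^ n"
  have "(?p has_real_derivative ?p') (at t)"
    using assms by (intro DERIV_mult DERIV_pow DERIV_power_Suc DERIV_ln)
  moreover have "?p t \<noteq> 0"
    using assms by simp
  ultimately have "((\<lambda>t. 1 / ?p t) has_real_derivative (0 * ?p t - 1 * ?p') / (?p t * ?p t)) (at t)"
    by (intro DERIV_divide DERIV_const)
  moreover have "(0 * ?p t - 1 * ?p') / (?p t * ?p t) =
      - real n / (t ^ (n + 1) * ln t ^ (k + 1)) - real (k + 1) / (t ^ (n + 1) * ln t ^ (k + 2))"
    using assms by (cases n) (simp_all add: field_simps)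
  ultimately show ?thesis
    by simp
qed

lemma sum_fact_stirling_Suc:
  fixes D :: "nat \<Rightarrow> real"
  shows "(\<Sum>k\<le>Suc n. fact k * real (stirling (Suc n) k) * D k) =
         real n * (\<Sum>k\<le>n. fact k * real (stirling n k) * D k) +
         (\<Sum>k\<le>n. fact k * real (stirling n k) * real (k + 1) * D (k + 1))"
proof -
  define h where "h k = fact k * real (stirling n k) * D k" for k
  have "(\<Sum>k\<le>Suc n. fact k * real (stirling (Suc n) k) * D k) =
        (\<Sum>k\<le>n. fact (Suc k) * real (stirling (Suc n) (Suc k)) * D (Suc k))"
    by (subst sum.atMost_Suc_shift) simp
  also have "\<dots> = real n * (\<Sum>k\<le>n. h (Suc k)) +
                  (\<Sum>k\<le>n. fact k * real (stirling n k) * real (k + 1) * D (k + 1))"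
    unfolding h_def sum_distrib_left sum.distrib[symmetric]
    by (rule sum.cong) (auto simp: algebra_simps)
  also have "(\<Sum>k\<le>n. h (Suc k)) = (\<Sum>k\<le>n. h k) - h 0"
    using sum.atMost_Suc_shift[of h n] by (simp add: h_def)
  also have "real n * ((\<Sum>k\<le>n. h k) - h 0) = real n * (\<Sum>k\<le>n. h k)"
    by (cases n) (auto simp: h_def)
  finally show ?thesis
    unfolding h_def .
qed

definition inverse_ln_deriv :: "nat \<Rightarrow> real \<Rightarrow> real" where
  "inverse_ln_deriv n t =
     (-1) ^ n * (\<Sum>k\<le>n. fact k * real (stirling n k) * (1 / (t ^ n * ln t ^ (k + 1))))"

lemma has_real_derivative_inverse_ln_deriv:
  fixes t :: real
  assumes "t > 0" and "ln t \<noteq> 0"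
  shows "(inverse_ln_deriv n has_real_derivative inverse_ln_deriv (Suc n) t) (at t)"
proof -
  define c where "c k = fact k * real (stirling n k)" for k
  define D where "D k = 1 / (t ^ (n + 1) * ln t ^ (k + 1))" for k
  have "(inverse_ln_deriv n has_real_derivative
          (-1) ^ n * (\<Sum>k\<le>n. c k * (- real n / (t ^ (n + 1) * ln t ^ (k + 1))
                                   - real (k + 1) / (t ^ (n + 1) * ln t ^ (k + 2))))) (at t)"
    unfolding inverse_ln_deriv_def[abs_def] c_def
    by (intro DERIV_cmult DERIV_sum has_real_derivative_inverse_power_ln_power assms)
  also have "(\<Sum>k\<le>n. c k * (- real n / (t ^ (n + 1) * ln t ^ (k + 1))
                              - real (k + 1) / (t ^ (n + 1) * ln t ^ (k + 2)))) =
             (\<Sum>k\<le>n. - (real n * (c k * D k) + c k * real (k + 1) * D (k + 1)))"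
    by (intro sum.cong refl) (simp add: D_def field_simps)
  also have "\<dots> = - (real n * (\<Sum>k\<le>n. c k * D k) +
                      (\<Sum>k\<le>n. c k * real (k + 1) * D (k + 1)))"
    by (simp only: sum_negf sum.distrib sum_distrib_left)
  also have "(-1) ^ n * \<dots> =
      (-1) ^ Suc n * (real n * (\<Sum>k\<le>n. c k * D k) +
                      (\<Sum>k\<le>n. c k * real (k + 1) * D (k + 1)))"
    by (simp add: algebra_simps)
  also have "\<dots> = inverse_ln_deriv (Suc n) t"
    unfolding inverse_ln_deriv_def sum_fact_stirling_Suc c_def D_def by simp
  finally show ?thesis .
qed

lemma higher_deriv_divide_ln:
  fixes c t :: real
  assumes "t > 0" and "t \<noteq> 1"
  shows "(deriv ^^ n) (\<lambda>t. c / ln t) t = c * inverse_ln_deriv n t"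
proof -
  define S where "S = {0::real<..} - {1}"
  have "open S"
    unfolding S_def by (intro open_Diff open_greaterThan closed_singleton)
  have "(deriv ^^ n) (\<lambda>t. c / ln t) s = c * inverse_ln_deriv n s" if "s \<in> S" for s
    using that
  proof (induction n arbitrary: s)
    case 0
    then show ?case
      by (simp add: inverse_ln_deriv_def)
  next
    case (Suc n)
    then have "s > 0" "ln s \<noteq> 0"
      by (auto simp: S_def)
    then have "((\<lambda>s. c * inverse_ln_deriv n s) has_real_derivative
                 c * inverse_ln_deriv (Suc n) s) (at s)"
      by (intro DERIV_cmult has_real_derivative_inverse_ln_deriv)
    then have "((deriv ^^ n) (\<lambda>t. c / ln t) has_real_derivative
                 c * inverse_ln_deriv (Suc n) s) (at s)"
      by (rule has_field_derivative_transform_within_open[OF _ \<open>open S\<close> Suc.prems])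
         (simp add: Suc.IH)
    then show ?case
      by (simp add: DERIV_imp_deriv)
  qed
  with assms show ?thesis
    by (simp add: S_def)
qed

theorem proposition4p4:
  fixes a n :: nat and x :: real
  assumes "a > 0" and "x > 0" and "x \<noteq> 1"
  shows "(deriv ^^ n) (\<lambda>t. log t (real a)) x =
     log x (real a) * ((-1) ^ n * fact n / x ^ n) *
     (\<Sum>y\<in>partitions_mult n.
        fact (\<Sum>i=1..n. y i) / (ln x) ^ (\<Sum>i=1..n. y i) *
        (\<Prod>i=1..n. 1 / (real i ^ y i * fact (y i))))"
proof -
  have "ln x \<noteq> 0"
    using assms by simp
  have "(deriv ^^ n) (\<lambda>t. log t (real a)) x = ln (real a) * inverse_ln_deriv n x"
    using higher_deriv_divide_ln[OF assms(2,3)] by (simp add: log_def)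
  also have "\<dots> = log x (real a) * ((-1) ^ n * fact n / x ^ n) *
                  (\<Sum>k\<le>n. fact k / ln x ^ k * (real (stirling n k) / fact n))"
    unfolding inverse_ln_deriv_def sum_distrib_left
    using \<open>ln x \<noteq> 0\<close> assms(2) by (intro sum.cong refl) (simp add: log_def field_simps)
  also have "\<dots> = log x (real a) * ((-1) ^ n * fact n / x ^ n) *
     (\<Sum>y\<in>partitions_mult n.
        fact (\<Sum>i=1..n. y i) / (ln x) ^ (\<Sum>i=1..n. y i) *
        (\<Prod>i=1..n. 1 / (real i ^ y i * fact (y i))))"
    using sum_partitions_mult_by_num_parts[of "\<lambda>k. fact k / ln x ^ k" n] by simp
  finally show ?thesis .
qed

end
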